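(* Assume $G$ is an algebraic torus. Let $(\delta,\delta')$ be an adjacent pair in $\mathsf M_{\mathbb R}\setminus\mathcal H$ separated by $H\in\mathcal H$, $\delta_0$ the point where $[\delta,\delta']$ meets $H$, and $F$ the unique facet of $\delta_0+\boldsymbol\nabla$ parallel to $H$ with $F\cap(\delta+\boldsymbol\nabla)\ne\emptyset$. Then $\mathcal C^F_\delta=\mathcal C_\delta\setminus\mathcal C_{\delta'}$, and hence $\mathcal C_\delta\setminus\mathcal C^F_\delta=\mathcal C_\delta\cap\mathcal C_{\delta'}$.
   Context: $G$ is an algebraic torus over an algebraically closed field of characteristic $0$ with character lattice $\mathsf M$, cocharacter lattice $\mathsf N$. $X$ is a quasi-symmetric representation with weights $\beta_1,\dots,\beta_d$ (for each line $L\subset\mathsf M_{\mathbb R}$, $\sum_{\beta_i\in L}\beta_i=0$); $\boldsymbol\Sigma=\{\sum a_i\beta_i:a_i\in[0,1]\}$ spans $\mathsf M_{\mathbb R}$ and the complement of the linear hyperplanes parallel to facets of $\boldsymbol\Sigma$ is nonempty. $\boldsymbol\nabla=\tfrac12\boldsymbol\Sigma$. $\mathcal H$ = affine hyperplanes $m+B$, $m\in\mathsf M$, $B\cap\boldsymbol\nabla$ a facet of $\boldsymbol\nabla$; adjacent pair: $\delta,\delta'$ avoid $\bigcup\mathcal H$ and exactly one member of $\mathcal H$ meets $[\delta,\delta']$. $\mathcal C_\delta=(\delta+\boldsymbol\nabla)\cap\mathsf M$. For $\chi\in\mathsf M$, $F_\chi(\delta_0)$ is the smallest face of $\delta_0+\boldsymbol\nabla$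 containing $\chi$, and $\mathcal C^F_\delta=\{\chi\in\mathcal C_\delta:\chi\in\partial(\delta_0+\boldsymbol\nabla),\ F_\chi(\delta_0)=F\}$. *)

theory Defs
  imports "HOL-Analysis.Analysis"
begin

text \<open>Character lattice M = Z^n inside M_R = R^n (n = CARD('n)).\<close>
definition lat :: "(real^'n) set" where
  "lat = {x. \<forall>i. x $ i \<in> \<int>}"

definition quasi_symmetric :: "nat \<Rightarrow> (nat \<Rightarrow> real^'n) \<Rightarrow> bool" where
  "quasi_symmetric d \<beta> \<longleftrightarrow>
     (\<forall>L::(real^'n) set. subspace L \<and> dim L = 1 \<longrightarrow>
        (\<Sum>i\<in>{i. i < d \<and> \<beta> i \<in> L}. \<beta> i) = 0)"

definition zonotope :: "nat \<Rightarrow> (nat \<Rightarrow> real^'n) \<Rightarrow> (real^'n) set" where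
  "zonotope d \<beta> = {\<Sum>i<d. a i *\<^sub>R \<beta> i | a. \<forall>i<d. 0 \<le> a i \<and> a i \<le> 1}"

definition nabla :: "nat \<Rightarrow> (nat \<Rightarrow> real^'n) \<Rightarrow> (real^'n) set" where
  "nabla d \<beta> = (\<lambda>x. (1/2) *\<^sub>R x) ` zonotope d \<beta>"

definition affine_hyperplane :: "(real^'n) set \<Rightarrow> bool" where
  "affine_hyperplane B \<longleftrightarrow> (\<exists>a b. a \<noteq> 0 \<and> B = {x. a \<bullet> x = b})"

definition hyps :: "nat \<Rightarrow> (nat \<Rightarrow> real^'n) \<Rightarrow> (real^'n) set set" where
  "hyps d \<beta> = {(+) m ` B | m B. m \<in> lat \<and> affine_hyperplane B \<and> (B \<inter> nabla d \<beta>) facet_of nabla d \<beta>}"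

definition adjacent :: "nat \<Rightarrow> (nat \<Rightarrow> real^'n) \<Rightarrow> real^'n \<Rightarrow> real^'n \<Rightarrow> bool" where
  "adjacent d \<beta> \<delta> \<delta>' \<longleftrightarrow>
     \<delta> \<notin> \<Union>(hyps d \<beta>) \<and> \<delta>' \<notin> \<Union>(hyps d \<beta>) \<and>
     (\<exists>!H. H \<in> hyps d \<beta> \<and> H \<inter> closed_segment \<delta> \<delta>' \<noteq> {})"

definition Cset :: "nat \<Rightarrow> (nat \<Rightarrow> real^'n) \<Rightarrow> real^'n \<Rightarrow> (real^'n) set" where
  "Cset d \<beta> \<delta> = ((+) \<delta> ` nabla d \<beta>) \<inter> lat"

definition min_face :: "(real^'n) set \<Rightarrow> real^'n \<Rightarrow> (real^'n) set" where
  "min_face P x = \<Inter>{F. F face_of P \<and> x \<in> F}"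

definition CFset :: "nat \<Rightarrow> (nat \<Rightarrow> real^'n) \<Rightarrow> real^'n \<Rightarrow> real^'n \<Rightarrow> (real^'n) set \<Rightarrow> (real^'n) set" where
  "CFset d \<beta> \<delta>0 \<delta> F = {c \<in> Cset d \<beta> \<delta>.
      c \<in> frontier ((+) \<delta>0 ` nabla d \<beta>) \<and> min_face ((+) \<delta>0 ` nabla d \<beta>) c = F}"

definition parallel_to :: "(real^'n) set \<Rightarrow> (real^'n) set \<Rightarrow> bool" where
  "parallel_to S H \<longleftrightarrow> (\<exists>v. affine hull S = (+) v ` H)"

end

theory Submission
  imports Defs
begin

(* Quasi-symmetry makes the weights sum to zero, so nabla is centrally symmetric and
   c \<in> \<delta> + nabla iff \<delta> \<in> c + nabla.  If c is a lattice point of C_\<delta> - C_\<delta>', the segment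
   [\<delta>, \<delta>'] leaves c + nabla, necessarily through a facet hyperplane of nabla translated by c;
   that is a wall of the arrangement, so by adjacency it is H and the exit point is \<delta>0.
   Hence c lies on the boundary of \<delta>0 + nabla, and reflecting in the same way shows that
   every facet of \<delta>0 + nabla through c is cut out by a hyperplane parallel to H.  As \<delta> \<notin> H,
   at most one such facet meets \<delta> + nabla, so it is F, and F is the smallest face containing c.
   Conversely, the translates w + (\<delta>0 + nabla) meeting F all have w on one side of the
   linear hyperplane parallel to H, whereas \<delta> - \<delta>0 and \<delta>' - \<delta>0 lie strictly on opposite
   sides; so F misses \<delta>' + nabla. *)

lemma quasi_symmetric_sum_eq_0:
  fixes \<beta> :: "nat \<Rightarrow> real^'n"
  assumes q: "quasi_symmetric d \<beta>"
  shows "(\<Sum>i<d. \<beta> i) = 0"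
proof -
  define S where "S = {i. i < d \<and> \<beta> i \<noteq> 0}"
  define g where "g i = span {\<beta> i}" for i
  have fS: "finite S" unfolding S_def by simp
  have "(\<Sum>i<d. \<beta> i) = (\<Sum>i\<in>S. \<beta> i)"
    by (rule sum.mono_neutral_right) (auto simp: S_def)
  also have "\<dots> = (\<Sum>L\<in>g ` S. \<Sum>i\<in>{i. i \<in> S \<and> g i = L}. \<beta> i)"
    by (rule sum.group[symmetric]) (use fS in auto)
  also have "\<dots> = 0"
  proof (rule sum.neutral, rule ballI)
    fix L assume "L \<in> g ` S"
    then obtain j where j: "j \<in> S" "L = span {\<beta> j}" by (auto simp: g_def)
    have sL: "subspace L" and dL: "dim L = 1" using j by (auto simp: S_def)
    have eq: "{i. i \<in> S \<and> g i = L} = {i. i < d \<and> \<beta> i \<in> L} - {i. \<beta> i = 0}"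
    proof (intro set_eqI iffI)
      fix i assume "i \<in> {i. i \<in> S \<and> g i = L}"
      then show "i \<in> {i. i < d \<and> \<beta> i \<in> L} - {i. \<beta> i = 0}"
        by (auto simp: S_def g_def span_base)
    next
      fix i assume i: "i \<in> {i. i < d \<and> \<beta> i \<in> L} - {i. \<beta> i = 0}"
      have "span {\<beta> i} \<subseteq> L" using i sL by (simp add: span_minimal)
      moreover have "dim L \<le> dim (span {\<beta> i})" using i dL by simp
      ultimately have "span {\<beta> i} = L"
        using subspace_dim_equal[of "span {\<beta> i}" L] sL by simp
      then show "i \<in> {i. i \<in> S \<and> g i = L}" using i by (auto simp: S_def g_def)
    qed
    have "(\<Sum>i\<in>{i. i \<in> S \<and> g i = L}. \<beta> i) = (\<Sum>i\<in>{i. i < d \<and> \<beta> i \<in> L}. \<beta> i)"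
      unfolding eq by (rule sum.mono_neutral_left) auto
    also have "\<dots> = 0" using q sL dL by (simp add: quasi_symmetric_def)
    finally show "(\<Sum>i\<in>{i. i \<in> S \<and> g i = L}. \<beta> i) = 0" .
  qed
  finally show ?thesis .
qed

lemma zonotope_uminus:
  assumes "(\<Sum>i<d. \<beta> i) = 0" "x \<in> zonotope d \<beta>"
  shows "- x \<in> zonotope d \<beta>"
proof -
  obtain a where a: "\<forall>i<d. 0 \<le> a i \<and> a i \<le> 1" "x = (\<Sum>i<d. a i *\<^sub>R \<beta> i)"
    using assms(2) by (auto simp: zonotope_def)
  have "(\<Sum>i<d. (1 - a i) *\<^sub>R \<beta> i) = (\<Sum>i<d. \<beta> i) - x"
    by (simp add: a(2) scaleR_diff_left sum_subtractf)
  then have "- x = (\<Sum>i<d. (1 - a i) *\<^sub>R \<beta> i)" using assms(1) by simp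
  moreover have "\<forall>i<d. 0 \<le> 1 - a i \<and> 1 - a i \<le> 1" using a(1) by auto
  ultimately show ?thesis
    unfolding zonotope_def by (intro CollectI exI[of _ "\<lambda>i. 1 - a i"]) auto
qed

lemma nabla_uminus:
  assumes "quasi_symmetric d \<beta>" "x \<in> nabla d \<beta>"
  shows "- x \<in> nabla d \<beta>"
proof -
  obtain z where z: "z \<in> zonotope d \<beta>" "x = (1/2) *\<^sub>R z"
    using assms(2) by (auto simp: nabla_def)
  have "- z \<in> zonotope d \<beta>"
    using zonotope_uminus[OF quasi_symmetric_sum_eq_0[OF assms(1)] z(1)] .
  then show ?thesis using z(2) unfolding nabla_def by force
qed

lemma zonotope_0: "zonotope 0 \<beta> = {0}"
  by (auto simp: zonotope_def)

lemma zonotope_Suc: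
  "zonotope (Suc d) \<beta> = (\<lambda>z. fst z + snd z) ` (zonotope d \<beta> \<times> closed_segment 0 (\<beta> d))"
proof (intro set_eqI iffI)
  fix x assume "x \<in> zonotope (Suc d) \<beta>"
  then obtain a where a: "\<forall>i<Suc d. 0 \<le> a i \<and> a i \<le> 1" "x = (\<Sum>i<Suc d. a i *\<^sub>R \<beta> i)"
    by (auto simp: zonotope_def)
  have "(\<Sum>i<d. a i *\<^sub>R \<beta> i) \<in> zonotope d \<beta>"
    using a(1) unfolding zonotope_def by auto
  moreover have "a d *\<^sub>R \<beta> d \<in> closed_segment 0 (\<beta> d)"
    using a(1) by (auto simp: in_segment)
  ultimately show "x \<in> (\<lambda>z. fst z + snd z) ` (zonotope d \<beta> \<times> closed_segment 0 (\<beta> d))"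
    using a(2) by (force intro: image_eqI[where x = "(\<Sum>i<d. a i *\<^sub>R \<beta> i, a d *\<^sub>R \<beta> d)"])
next
  fix x assume "x \<in> (\<lambda>z. fst z + snd z) ` (zonotope d \<beta> \<times> closed_segment 0 (\<beta> d))"
  then obtain y s where ys: "y \<in> zonotope d \<beta>" "s \<in> closed_segment 0 (\<beta> d)" "x = y + s"
    by auto
  obtain a where a: "\<forall>i<d. 0 \<le> a i \<and> a i \<le> 1" "y = (\<Sum>i<d. a i *\<^sub>R \<beta> i)"
    using ys(1) by (auto simp: zonotope_def)
  obtain u where u: "0 \<le> u" "u \<le> 1" "s = u *\<^sub>R \<beta> d"
    using ys(2) by (auto simp: in_segment)
  have "(\<Sum>i<d. (a(d := u)) i *\<^sub>R \<beta> i) = y"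
    unfolding a(2) by (intro sum.cong) auto
  then have "x = (\<Sum>i<Suc d. (a(d := u)) i *\<^sub>R \<beta> i)"
    using ys(3) u(3) by simp
  moreover have "\<forall>i<Suc d. 0 \<le> (a(d := u)) i \<and> (a(d := u)) i \<le> 1"
    using a(1) u by (auto simp: less_Suc_eq)
  ultimately show "x \<in> zonotope (Suc d) \<beta>" unfolding zonotope_def by blast
qed

lemma polytope_zonotope: "polytope (zonotope d \<beta>)"
proof (induction d)
  case 0
  then show ?case by (simp add: zonotope_0 polytope_sing)
next
  case (Suc d)
  have "linear (\<lambda>z::(real^'a) \<times> (real^'a). fst z + snd z)"
    by (simp add: linear_iff algebra_simps)
  moreover have "polytope (closed_segment 0 (\<beta> d))"
    by (simp add: segment_convex_hull polytope_convex_hull)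
  ultimately show ?case
    unfolding zonotope_Suc by (intro polytope_linear_image polytope_Times Suc.IH)
qed

lemma polytope_nabla: "polytope (nabla d \<beta>)"
  unfolding nabla_def
  by (intro polytope_linear_image polytope_zonotope) (simp add: linear_iff algebra_simps)

lemma affine_hull_nabla:
  assumes "span (zonotope d \<beta>) = UNIV"
  shows "affine hull (nabla d \<beta>) = UNIV"
proof -
  have "0 \<in> zonotope d \<beta>"
    unfolding zonotope_def by (intro CollectI exI[of _ "\<lambda>i. 0"]) auto
  then have "affine hull (zonotope d \<beta>) = UNIV"
    using affine_hull_span_0 assms hull_inc by metis
  then have "affine hull (nabla d \<beta>) = (\<lambda>x. (1/2) *\<^sub>R x) ` UNIV"
    unfolding nabla_def by (metis affine_hull_linear_image bounded_linear_scaleR_right)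
  also have "\<dots> = UNIV"
    by (auto intro!: image_eqI[where x = "2 *\<^sub>R x" for x])
  finally show ?thesis .
qed

lemma translation_symmetric:
  fixes S :: "'a::ab_group_add set"
  assumes "\<And>x. x \<in> S \<Longrightarrow> - x \<in> S" "a \<in> (+) b ` S"
  shows "b \<in> (+) a ` S"
proof -
  obtain y where "y \<in> S" "a = b + y" using assms(2) by auto
  then show ?thesis using assms(1) by (force intro: image_eqI[where x = "- y"])
qed

lemma frontier_uminus_symmetric:
  fixes S :: "'a::euclidean_space set"
  assumes "\<And>x. x \<in> S \<Longrightarrow> - x \<in> S" "x \<in> frontier S"
  shows "- x \<in> frontier S"
proof -
  have "uminus ` S = S"
    using assms(1) by (force intro: image_eqI[where x = "- y" for y])
  moreover have "frontier (uminus ` S) = uminus ` frontier S"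
    by (simp add: frontier_def interior_negations image_set_diff
        closure_injective_linear_image[symmetric] linear_uminus)
  ultimately show ?thesis using assms(2) by (metis imageI)
qed

lemma frontier_translation_symmetric:
  fixes S :: "'a::euclidean_space set"
  assumes "\<And>x. x \<in> S \<Longrightarrow> - x \<in> S" "a \<in> frontier ((+) b ` S)"
  shows "b \<in> frontier ((+) a ` S)"
  using translation_symmetric[of "frontier S"] frontier_uminus_symmetric[OF assms(1)] assms(2)
  by (simp add: frontier_translation)

lemma frontier_polyhedron_full_dim:
  fixes P :: "'a::euclidean_space set"
  assumes "polyhedron P" "affine hull P = UNIV"
  shows "frontier P = \<Union>{F. F facet_of P}"
  using rel_frontier_of_polyhedron[OF assms(1)] rel_interior_interior[OF assms(2)]
  by (simp add: rel_frontier_def frontier_def)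

lemma facet_of_reflection:
  fixes N :: "'a::euclidean_space set"
  assumes "\<And>x. x \<in> N \<Longrightarrow> - x \<in> N" "G facet_of (+) p ` N"
  shows "(\<lambda>x. p - x) ` G facet_of N"
proof -
  have lin: "linear (uminus :: 'a \<Rightarrow> 'a)" and inj: "inj (uminus :: 'a \<Rightarrow> 'a)"
    by (simp_all add: linear_uminus)
  have "(+) a ` G' facet_of (+) a ` S'" if "G' facet_of S'" for a G' and S' :: "'a set"
    using that by (simp add: facet_of_def aff_dim_translation_eq)
  from this[OF assms(2), of "- p"]
  have "(+) (- p) ` G facet_of N" by (simp add: image_image)
  then have "uminus ` (+) (- p) ` G facet_of uminus ` N"
    by (simp add: facet_of_def face_of_linear_image[OF lin inj]
        aff_dim_injective_linear_image[OF lin inj])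
  moreover have "uminus ` N = N"
    using assms(1) by (force intro: image_eqI[where x = "- y" for y])
  ultimately show ?thesis by (simp add: image_image)
qed

lemma reflection_Int_hyperplane:
  fixes N :: "'a::real_inner set"
  assumes "\<And>x. x \<in> N \<Longrightarrow> - x \<in> N"
  shows "(\<lambda>x. p - x) ` ((+) p ` N \<inter> {x. a \<bullet> x = k}) = N \<inter> {x. (- a) \<bullet> x = k - a \<bullet> p}"
proof (intro set_eqI iffI)
  fix y assume "y \<in> (\<lambda>x. p - x) ` ((+) p ` N \<inter> {x. a \<bullet> x = k})"
  then show "y \<in> N \<inter> {x. (- a) \<bullet> x = k - a \<bullet> p}"
    using assms by (auto simp: inner_diff_right inner_add_right)
next
  fix y assume y: "y \<in> N \<inter> {x. (- a) \<bullet> x = k - a \<bullet> p}"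
  then have "p + (- y) \<in> (+) p ` N"
    using assms by blast
  then have "p - y \<in> (+) p ` N \<inter> {x. a \<bullet> x = k}"
    using y by (simp add: inner_diff_right)
  then show "y \<in> (\<lambda>x. p - x) ` ((+) p ` N \<inter> {x. a \<bullet> x = k})"
    by (rule image_eqI[rotated]) simp
qed

lemma hyperplane_translation:
  fixes a :: "'a::real_inner"
  shows "(+) m ` {x. a \<bullet> x = b} = {x. a \<bullet> x = b + a \<bullet> m}"
proof (intro set_eqI iffI)
  fix x assume "x \<in> {x. a \<bullet> x = b + a \<bullet> m}"
  then show "x \<in> (+) m ` {x. a \<bullet> x = b}"
    by (intro image_eqI[where x = "x - m"]) (auto simp: inner_diff_right)
qed (auto simp: inner_add_right)

lemma face_of_Int_hyperplane_side:
  fixes P :: "'a::real_inner set"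
  assumes "convex P" "F face_of P" "F = P \<inter> {x. e \<bullet> x = k}"
  shows "P \<subseteq> {x. e \<bullet> x \<le> k} \<or> P \<subseteq> {x. e \<bullet> x \<ge> k}"
proof (rule ccontr)
  assume "\<not> ?thesis"
  then obtain y1 y2 where y: "y1 \<in> P" "y2 \<in> P" "e \<bullet> y1 > k" "e \<bullet> y2 < k"
    by (auto simp: not_le subset_eq)
  define t where "t = (e \<bullet> y1 - k) / (e \<bullet> y1 - e \<bullet> y2)"
  have t: "0 < t" "t < 1" "t * (e \<bullet> y1 - e \<bullet> y2) = e \<bullet> y1 - k"
    using y by (auto simp: t_def field_simps)
  define z where "z = (1 - t) *\<^sub>R y1 + t *\<^sub>R y2"
  have "z \<in> open_segment y1 y2"
    using y t by (auto simp: in_segment z_def)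
  moreover have "z \<in> F"
  proof -
    have "z \<in> P" using assms(1) y t unfolding z_def by (intro convexD) auto
    moreover have "e \<bullet> z = k"
      using t(3) by (simp add: z_def inner_add_right algebra_simps)
    ultimately show ?thesis using assms(3) by auto
  qed
  ultimately have "y1 \<in> F" using face_ofD[OF assms(2) _ y(1,2)] by blast
  then show False using assms(3) y by auto
qed

lemma face_eq_Int_parallel_hyperplane:
  fixes P :: "(real^'n) set"
  assumes "convex P" "F face_of P" "parallel_to F {x. e \<bullet> x = h}"
  obtains k where "F = P \<inter> {x. e \<bullet> x = k}"
proof -
  obtain v where "affine hull F = {x. e \<bullet> x = h + e \<bullet> v}"
    using assms(3) unfolding parallel_to_def hyperplane_translation by blast
  then show ?thesis
    using face_of_imp_eq_affine_Int[OF assms(1,2)] that by (simp add: Int_commute)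
qed

lemma face_meets_translates_inner_mult_nonneg:
  fixes P :: "'a::real_inner set"
  assumes "convex P" "F face_of P" "F = P \<inter> {x. e \<bullet> x = k}"
    "x1 \<in> F \<inter> (+) w1 ` P" "x2 \<in> F \<inter> (+) w2 ` P"
  shows "0 \<le> (e \<bullet> w1) * (e \<bullet> w2)"
proof -
  obtain y1 y2 where y: "y1 \<in> P" "y2 \<in> P" "e \<bullet> w1 + e \<bullet> y1 = k" "e \<bullet> w2 + e \<bullet> y2 = k"
    using assms(3-5) by (auto simp: inner_add_right)
  from face_of_Int_hyperplane_side[OF assms(1-3)]
  have "(0 \<le> e \<bullet> w1 \<and> 0 \<le> e \<bullet> w2) \<or> (e \<bullet> w1 \<le> 0 \<and> e \<bullet> w2 \<le> 0)"
    using y by fastforce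
  then show ?thesis by (auto simp: zero_le_mult_iff)
qed

lemma face_meets_translate_imp_supporting:
  fixes P :: "'a::real_inner set"
  assumes "convex P" "F face_of P" "F = P \<inter> {x. e \<bullet> x = k}"
    "x \<in> F \<inter> (+) w ` P" "0 < e \<bullet> w"
  shows "P \<subseteq> {x. e \<bullet> x \<le> k}"
proof -
  obtain y where "y \<in> P" "e \<bullet> w + e \<bullet> y = k"
    using assms(3,4) by (auto simp: inner_add_right)
  then show ?thesis
    using face_of_Int_hyperplane_side[OF assms(1-3)] assms(5) by fastforce
qed

lemma faces_meeting_translate_eq:
  fixes P :: "'a::real_inner set"
  assumes "convex P" "F1 face_of P" "F2 face_of P"
    "F1 = P \<inter> {x. e \<bullet> x = k1}" "F2 = P \<inter> {x. e \<bullet> x = k2}"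
    "x1 \<in> F1 \<inter> (+) w ` P" "x2 \<in> F2 \<inter> (+) w ` P" "0 < e \<bullet> w"
  shows "F1 = F2"
proof -
  have "P \<subseteq> {x. e \<bullet> x \<le> k1}" "P \<subseteq> {x. e \<bullet> x \<le> k2}"
    using face_meets_translate_imp_supporting assms by blast+
  then have "k1 = k2" using assms(4-7) by force
  then show ?thesis using assms(4,5) by simp
qed

lemma min_face_eq_facet:
  assumes "polyhedron P" "F facet_of P" "c \<in> F"
    "\<And>G. G facet_of P \<Longrightarrow> c \<in> G \<Longrightarrow> G = F"
  shows "min_face P c = F"
proof
  show "min_face P c \<subseteq> F"
    unfolding min_face_def using assms(2,3) facet_of_imp_face_of by blast
  show "F \<subseteq> min_face P c"
    unfolding min_face_def
  proof (rule Inter_greatest)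
    fix F' assume "F' \<in> {F. F face_of P \<and> c \<in> F}"
    then have F': "F' face_of P" "c \<in> F'" by auto
    show "F \<subseteq> F'"
    proof (cases "F' = P")
      case True
      then show ?thesis using assms(2) facet_of_imp_subset by blast
    next
      case False
      then have "F' = \<Inter>{G. G facet_of P \<and> F' \<subseteq> G}"
        using face_of_polyhedron[OF assms(1) F'(1)] F'(2) by blast
      moreover have "G = F" if "G facet_of P" "F' \<subseteq> G" for G
        using assms(4) that F'(2) by blast
      ultimately show ?thesis by auto
    qed
  qed
qed

lemma closed_segment_Int_hyperplane_unique:
  fixes e :: "'a::real_inner"
  assumes "e \<bullet> \<delta> \<noteq> h" "p \<in> closed_segment \<delta> \<delta>'" "q \<in> closed_segment \<delta> \<delta>'"
    "e \<bullet> p = h" "e \<bullet> q = h"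
  shows "p = q"
proof -
  obtain s where s: "p = (1 - s) *\<^sub>R \<delta> + s *\<^sub>R \<delta>'" using assms(2) by (auto simp: in_segment)
  obtain t where t: "q = (1 - t) *\<^sub>R \<delta> + t *\<^sub>R \<delta>'" using assms(3) by (auto simp: in_segment)
  have hs: "e \<bullet> \<delta> + s * (e \<bullet> \<delta>' - e \<bullet> \<delta>) = h" and ht: "e \<bullet> \<delta> + t * (e \<bullet> \<delta>' - e \<bullet> \<delta>) = h"
    using assms(4,5) s t by (auto simp: inner_add_right algebra_simps)
  then have "(s - t) * (e \<bullet> \<delta>' - e \<bullet> \<delta>) = 0" "e \<bullet> \<delta>' \<noteq> e \<bullet> \<delta>"
    using assms(1) by (auto simp: algebra_simps)
  then have "s = t" by simp
  then show ?thesis using s t by simp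
qed

lemma closed_segment_crossing_inner_mult_neg:
  fixes e :: "'a::real_inner"
  assumes "\<delta>0 \<in> closed_segment \<delta> \<delta>'" "e \<bullet> \<delta> \<noteq> e \<bullet> \<delta>0" "e \<bullet> \<delta>' \<noteq> e \<bullet> \<delta>0"
  shows "(e \<bullet> (\<delta> - \<delta>0)) * (e \<bullet> (\<delta>' - \<delta>0)) < 0"
proof -
  obtain u where u: "0 \<le> u" "u \<le> 1" "\<delta>0 = (1 - u) *\<^sub>R \<delta> + u *\<^sub>R \<delta>'"
    using assms(1) by (auto simp: in_segment)
  have "\<delta> - \<delta>0 = u *\<^sub>R (\<delta> - \<delta>')" "\<delta>' - \<delta>0 = (1 - u) *\<^sub>R (\<delta>' - \<delta>)"
    using u(3) by (simp_all add: algebra_simps)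
  then have "e \<bullet> (\<delta> - \<delta>0) = u * (e \<bullet> (\<delta> - \<delta>'))"
    "e \<bullet> (\<delta>' - \<delta>0) = - ((1 - u) * (e \<bullet> (\<delta> - \<delta>')))"
    by (simp_all only: inner_scaleR_right) (simp add: inner_diff_right algebra_simps)
  moreover from this have "u \<noteq> 0" "u \<noteq> 1" "e \<bullet> (\<delta> - \<delta>') \<noteq> 0"
    using assms(2,3) by (auto simp: inner_diff_right)
  ultimately show ?thesis
    using u(1,2) by (auto simp: zero_less_mult_iff mult_less_0_iff)
qed

lemma hyps_hyperplane:
  assumes "H \<in> hyps d \<beta>"
  obtains e h where "e \<noteq> 0" "H = {x. e \<bullet> x = h}"
  using assms unfolding hyps_def affine_hyperplane_def by (auto simp: hyperplane_translation)

lemma hyps_memI: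
  assumes "c \<in> lat" "a \<noteq> 0" "nabla d \<beta> \<inter> {x. a \<bullet> x = b} facet_of nabla d \<beta>"
  shows "{x. a \<bullet> x = b + a \<bullet> c} \<in> hyps d \<beta>"
proof -
  have "affine_hyperplane {x. a \<bullet> x = b}"
    unfolding affine_hyperplane_def using assms(2) by blast
  moreover have "{x. a \<bullet> x = b} \<inter> nabla d \<beta> facet_of nabla d \<beta>"
    using assms(3) by (simp add: Int_commute)
  ultimately have "(+) c ` {x. a \<bullet> x = b} \<in> hyps d \<beta>"
    using assms(1) unfolding hyps_def by blast
  then show ?thesis by (simp add: hyperplane_translation)
qed

lemma adjacent_crossing_unique:
  assumes "adjacent d \<beta> \<delta> \<delta>'" "H \<in> hyps d \<beta>" "\<delta>0 \<in> H \<inter> closed_segment \<delta> \<delta>'"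
    "H' \<in> hyps d \<beta>" "p \<in> H' \<inter> closed_segment \<delta> \<delta>'"
  shows "H' = H \<and> p = \<delta>0"
proof
  show "H' = H"
    using assms unfolding adjacent_def by blast
  obtain e h where "H = {x. e \<bullet> x = h}"
    using hyps_hyperplane[OF assms(2)] by blast
  moreover have "\<delta> \<notin> H"
    using assms(1,2) unfolding adjacent_def by blast
  ultimately show "p = \<delta>0"
    using closed_segment_Int_hyperplane_unique[of e \<delta> h p \<delta>' \<delta>0] assms(3,5) \<open>H' = H\<close>
    by auto
qed

locale wall_crossing =
  fixes d :: nat and \<beta> :: "nat \<Rightarrow> real^'n" and \<delta> \<delta>' \<delta>0 :: "real^'n"
    and H F :: "(real^'n) set"
  assumes qsym: "quasi_symmetric d \<beta>"
    and spans: "span (zonotope d \<beta>) = UNIV"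
    and adj: "adjacent d \<beta> \<delta> \<delta>'"
    and H_hyps: "H \<in> hyps d \<beta>"
    and \<delta>0_crossing: "\<delta>0 \<in> H \<inter> closed_segment \<delta> \<delta>'"
    and F_facet: "F facet_of ((+) \<delta>0 ` nabla d \<beta>)"
    and F_parallel: "parallel_to F H"
    and F_meets: "F \<inter> ((+) \<delta> ` nabla d \<beta>) \<noteq> {}"
begin

abbreviation N where "N \<equiv> nabla d \<beta>"
abbreviation P where "P \<equiv> (+) \<delta>0 ` N"

lemma N_uminus: "x \<in> N \<Longrightarrow> - x \<in> N"
  using nabla_uminus[OF qsym] .

lemma polyhedron_N: "polyhedron N"
  by (simp add: polytope_nabla polytope_imp_polyhedron)

lemma polyhedron_P: "polyhedron P"
  by (simp add: polytope_nabla polytope_imp_polyhedron polytope_translation_eq)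

lemma convex_P: "convex P"
  using polyhedron_P polyhedron_imp_convex by blast

lemma frontier_N: "frontier N = \<Union>{G. G facet_of N}"
  using frontier_polyhedron_full_dim[OF polyhedron_N affine_hull_nabla[OF spans]] .

lemma frontier_P: "frontier P = \<Union>{G. G facet_of P}"
  using frontier_polyhedron_full_dim[OF polyhedron_P] affine_hull_nabla[OF spans]
  by (simp add: affine_hull_translation)

lemma translation_N_eq: "(+) x ` N = (+) (x - \<delta>0) ` P"
  by (simp add: image_image)

lemma delta_notin_H: "\<delta> \<notin> H" "\<delta>' \<notin> H"
proof -
  have "\<delta> \<notin> \<Union>(hyps d \<beta>)" "\<delta>' \<notin> \<Union>(hyps d \<beta>)"
    using adj unfolding adjacent_def by simp_all
  then show "\<delta> \<notin> H" "\<delta>' \<notin> H" using H_hyps by blast+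
qed

lemma crossing_unique: "H' \<in> hyps d \<beta> \<Longrightarrow> p \<in> H' \<inter> closed_segment \<delta> \<delta>' \<Longrightarrow> H' = H \<and> p = \<delta>0"
  using adjacent_crossing_unique[OF adj H_hyps \<delta>0_crossing] by blast

lemma F_meets_translate: obtains x where "x \<in> F \<inter> (+) (\<delta> - \<delta>0) ` P"
  using F_meets unfolding translation_N_eq[of \<delta>] by blast

lemma H_eq_hyperplane_of_lattice_facet:
  assumes c: "c \<in> lat" "c \<in> G" and G: "G facet_of P" "G = P \<inter> {x. a \<bullet> x = k}" "a \<noteq> 0"
  shows "H = {x. a \<bullet> x = a \<bullet> \<delta>0}"
proof -
  have ac: "a \<bullet> c = k" using G(2) c(2) by blast
  have "N \<inter> {x. (- a) \<bullet> x = k - a \<bullet> \<delta>0} facet_of N"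
    using facet_of_reflection[OF N_uminus G(1)] reflection_Int_hyperplane[OF N_uminus] G(2)
    by simp
  then have "{x. (- a) \<bullet> x = k - a \<bullet> \<delta>0 + (- a) \<bullet> c} \<in> hyps d \<beta>"
    using G(3) by (intro hyps_memI[OF c(1)]) simp_all
  moreover have "\<delta>0 \<in> {x. (- a) \<bullet> x = k - a \<bullet> \<delta>0 + (- a) \<bullet> c}"
    using ac by simp
  ultimately have "{x. (- a) \<bullet> x = k - a \<bullet> \<delta>0 + (- a) \<bullet> c} = H"
    using crossing_unique \<delta>0_crossing by blast
  then show ?thesis
    using ac by auto
qed

lemma facet_through_lattice_point_eq_F:
  assumes c: "c \<in> lat" "c \<in> (+) \<delta> ` N" and G: "G facet_of P" "c \<in> G"
  shows "G = F"
proof -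
  obtain a k where a: "a \<noteq> 0" "P \<subseteq> {x. a \<bullet> x \<le> k}" "G = P \<inter> {x. a \<bullet> x = k}"
    using facet_of_polyhedron[OF polyhedron_P G(1)] by blast
  have H_eq: "H = {x. a \<bullet> x = a \<bullet> \<delta>0}"
    using H_eq_hyperplane_of_lattice_facet[OF c(1) G(2,1) a(3,1)] .
  then obtain kF where kF: "F = P \<inter> {x. a \<bullet> x = kF}"
    using face_eq_Int_parallel_hyperplane[OF convex_P facet_of_imp_face_of[OF F_facet]] F_parallel
    by metis
  obtain x where x: "x \<in> F \<inter> (+) (\<delta> - \<delta>0) ` P"
    using F_meets_translate .
  have c_translate: "c \<in> G \<inter> (+) (\<delta> - \<delta>0) ` P"
    using G(2) c(2) translation_N_eq[of \<delta>] by simp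
  then obtain z where z: "z \<in> P" "c = (\<delta> - \<delta>0) + z"
    by blast
  moreover have "a \<bullet> z \<le> k" "a \<bullet> c = k"
    using a(2,3) z(1) G(2) by blast+
  ultimately have "0 \<le> a \<bullet> (\<delta> - \<delta>0)"
    by (simp add: inner_add_right)
  moreover have "a \<bullet> (\<delta> - \<delta>0) \<noteq> 0"
    using delta_notin_H(1) H_eq by (simp add: inner_diff_right)
  ultimately show ?thesis
    using faces_meeting_translate_eq[OF convex_P facet_of_imp_face_of[OF G(1)]
        facet_of_imp_face_of[OF F_facet] a(3) kF c_translate x] by simp
qed

lemma CFset_subset_Cset_diff: "CFset d \<beta> \<delta>0 \<delta> F \<subseteq> Cset d \<beta> \<delta> - Cset d \<beta> \<delta>'"
proof
  fix c assume "c \<in> CFset d \<beta> \<delta>0 \<delta> F"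
  then have cF: "c \<in> F" and cC: "c \<in> Cset d \<beta> \<delta>"
    unfolding CFset_def min_face_def by auto
  obtain e h where "H = {x. e \<bullet> x = h}"
    using hyps_hyperplane[OF H_hyps] by blast
  then have He: "H = {x. e \<bullet> x = e \<bullet> \<delta>0}"
    using \<delta>0_crossing by auto
  then obtain k where k: "F = P \<inter> {x. e \<bullet> x = k}"
    using face_eq_Int_parallel_hyperplane[OF convex_P facet_of_imp_face_of[OF F_facet]] F_parallel
    by metis
  obtain x where x: "x \<in> F \<inter> (+) (\<delta> - \<delta>0) ` P"
    using F_meets_translate .
  have "(e \<bullet> (\<delta> - \<delta>0)) * (e \<bullet> (\<delta>' - \<delta>0)) < 0"
    using closed_segment_crossing_inner_mult_neg \<delta>0_crossing delta_notin_H He by blast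
  then have "c \<notin> (+) (\<delta>' - \<delta>0) ` P"
    using face_meets_translates_inner_mult_nonneg[OF convex_P facet_of_imp_face_of[OF F_facet] k x]
      cF by fastforce
  then show "c \<in> Cset d \<beta> \<delta> - Cset d \<beta> \<delta>'"
    using cC unfolding Cset_def translation_N_eq[of \<delta>'] by blast
qed

lemma delta0_in_frontier_translation:
  assumes c: "c \<in> lat" "\<delta> \<in> (+) c ` N" "\<delta>' \<notin> (+) c ` N"
  shows "\<delta>0 \<in> frontier ((+) c ` N)"
proof -
  obtain p where p: "p \<in> closed_segment \<delta> \<delta>'" "p \<in> frontier ((+) c ` N)"
    using connected_Int_frontier[of "closed_segment \<delta> \<delta>'" "(+) c ` N"] c(2,3) by blast
  then obtain q where q: "q \<in> frontier N" "p = c + q"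
    by (auto simp: frontier_translation)
  then obtain G where G: "G facet_of N" "q \<in> G"
    using frontier_N by auto
  obtain a b where ab: "a \<noteq> 0" "G = N \<inter> {x. a \<bullet> x = b}"
    using facet_of_polyhedron[OF polyhedron_N G(1)] by metis
  have "{x. a \<bullet> x = b + a \<bullet> c} \<in> hyps d \<beta>"
    using hyps_memI[OF c(1) ab(1)] G(1) ab(2) by simp
  moreover have "p \<in> {x. a \<bullet> x = b + a \<bullet> c}"
    using q G(2) ab(2) by (simp add: inner_add_right)
  ultimately have "p = \<delta>0"
    using crossing_unique p(1) by blast
  then show ?thesis using p(2) by simp
qed

lemma Cset_diff_subset_CFset: "Cset d \<beta> \<delta> - Cset d \<beta> \<delta>' \<subseteq> CFset d \<beta> \<delta>0 \<delta> F"
proof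
  fix c assume "c \<in> Cset d \<beta> \<delta> - Cset d \<beta> \<delta>'"
  then have c: "c \<in> lat" "c \<in> (+) \<delta> ` N" "c \<notin> (+) \<delta>' ` N"
    unfolding Cset_def by auto
  have "\<delta> \<in> (+) c ` N" "\<delta>' \<notin> (+) c ` N"
    using c(2,3) translation_symmetric[OF N_uminus] by blast+
  then have "c \<in> frontier P"
    using delta0_in_frontier_translation[OF c(1)] frontier_translation_symmetric[OF N_uminus] by blast
  then obtain G where "G facet_of P" "c \<in> G"
    using frontier_P by auto
  then have "c \<in> F"
    using facet_through_lattice_point_eq_F[OF c(1,2)] by blast
  moreover have "min_face P c = F"
    using min_face_eq_facet[OF polyhedron_P F_facet \<open>c \<in> F\<close>]
      facet_through_lattice_point_eq_F[OF c(1,2)] by blast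
  ultimately show "c \<in> CFset d \<beta> \<delta>0 \<delta> F"
    using c(1,2) \<open>c \<in> frontier P\<close> by (simp add: CFset_def Cset_def)
qed

end

theorem lemma4p13:
  fixes d :: nat and \<beta> :: "nat \<Rightarrow> real^'n"
    and \<delta> \<delta>' \<delta>0 :: "real^'n" and H F :: "(real^'n) set"
  assumes weights: "\<forall>i<d. \<beta> i \<in> lat"
    and qsym: "quasi_symmetric d \<beta>"
    and spans: "span (zonotope d \<beta>) = UNIV"
    and generic: "UNIV - \<Union>{B. subspace B \<and>
                     (\<exists>F'. F' facet_of zonotope d \<beta> \<and> parallel_to F' B)} \<noteq> ({} :: (real^'n) set)"
    and adj: "adjacent d \<beta> \<delta> \<delta>'"
    and H: "H \<in> hyps d \<beta>" "H \<inter> closed_segment \<delta> \<delta>' \<noteq> {}"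
    and d0: "\<delta>0 \<in> H \<inter> closed_segment \<delta> \<delta>'"
    and F: "F facet_of ((+) \<delta>0 ` nabla d \<beta>)" "parallel_to F H"
           "F \<inter> ((+) \<delta> ` nabla d \<beta>) \<noteq> {}"
  shows "CFset d \<beta> \<delta>0 \<delta> F = Cset d \<beta> \<delta> - Cset d \<beta> \<delta>'
       \<and> Cset d \<beta> \<delta> - CFset d \<beta> \<delta>0 \<delta> F = Cset d \<beta> \<delta> \<inter> Cset d \<beta> \<delta>'"
proof -
  interpret wall_crossing d \<beta> \<delta> \<delta>' \<delta>0 H F
    unfolding wall_crossing_def using qsym spans adj H(1) d0 F by blast
  have "CFset d \<beta> \<delta>0 \<delta> F = Cset d \<beta> \<delta> - Cset d \<beta> \<delta>'"
    using CFset_subset_Cset_diff Cset_diff_subset_CFset by (rule subset_antisym)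
  then show ?thesis by auto
qed

end
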